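(* Let $p$ be a prime and let $a_{g-1},\dots,a_0$ be integers with $|a_{g-1}p|>2g$ and $a_0$ not divisible by $p$. Set $q(x)=x^g+a_{g-1}px^{g-1}+\cdots+a_1px+a_0p$. Then $\mathrm{sym}(q)(x)=x^g\,q\!\left(x+\frac1x\right)$ satisfies the homological criterion, i.e. it is symplectically irreducible, is not a cyclotomic polynomial, and is not a polynomial in $x^k$ for any $k>1$.
   Context: A symplectic polynomial is an even-degree integer polynomial that is monic and palindromic (equivalently, the characteristic polynomial of an element of $\mathrm{Sp}(2n,\mathbb{Z})$). A symplectic polynomial is symplectically irreducible if it is not a product of two nontrivial symplectic polynomials. A cyclotomic polynomial is the minimal polynomial over $\mathbb{Q}$ of a primitive $n$-th root of unity. *)

theory Defs
  imports "HOL-Computational_Algebra.Polynomial_Factorial"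
begin

definition symplectic_poly :: "int poly \<Rightarrow> bool" where
  "symplectic_poly f \<longleftrightarrow> even (degree f) \<and> lead_coeff f = 1 \<and> reflect_poly f = f"

definition symp_irreducible :: "int poly \<Rightarrow> bool" where
  "symp_irreducible f \<longleftrightarrow> symplectic_poly f \<and>
     \<not> (\<exists>g h. symplectic_poly g \<and> symplectic_poly h \<and> degree g > 0 \<and> degree h > 0 \<and> f = g * h)"

text \<open>Cyclotomic: (integer) polynomial equal to the minimal polynomial over Q of a primitive
  n-th root of unity, i.e. monic, irreducible over Q, with such a root.\<close>
definition cyclotomic_poly :: "int poly \<Rightarrow> bool" where
  "cyclotomic_poly f \<longleftrightarrow> (\<exists>n::nat. n > 0 \<and> (\<exists>z::complex. z ^ n = 1 \<and> (\<forall>k. 0 < k \<and> k < n \<longrightarrow> z ^ k \<noteq> 1) \<and>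
      lead_coeff f = 1 \<and> irreducible (map_poly (of_int :: int \<Rightarrow> rat) f) \<and>
      poly (map_poly of_int f) z = 0))"

text \<open>sym(q)(x) = x^g q(x + 1/x), where g = deg q, as a polynomial:
  sum of q_i (x^2+1)^i x^(g-i).\<close>
definition sym_poly :: "int poly \<Rightarrow> int poly" where
  "sym_poly q = (\<Sum>i\<le>degree q. smult (coeff q i) ([:1, 0, 1:] ^ i * monom 1 (degree q - i)))"

end

theory Submission
  imports Defs "HOL-Computational_Algebra.Field_as_Ring"
    "HOL-Computational_Algebra.Fundamental_Theorem_Algebra"
begin

(* Write sym_m(R) = x^m R(x + 1/x) for degree R <= m. The map R |-> sym_m(R) is linear, injective
   and multiplicative, sym_m(R) sym_n(T) = sym_(m+n)(R T), and its image consists exactly of the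
   polynomials whose coefficients are symmetric about x^m. So a splitting of sym(q) into symplectic
   factors of positive degree descends to a splitting of q, which Eisenstein's criterion at p forbids.

   The other two claims come from the coefficient of x in sym(q), which is a_(g-1) p. It is nonzero,
   while a polynomial in x^k with k > 1 has no linear term. By symmetry it is also the coefficient of
   x^(2g-1), that is minus the sum of the 2g roots of sym(q). All roots of a cyclotomic polynomial are
   roots of unity, so this sum would have absolute value at most 2g < |a_(g-1) p|. *)

section \<open>The transform \<open>R \<mapsto> x\<^sup>m R(x + 1/x)\<close>\<close>

(* Equal to x^m R(x + 1/x) when degree R <= m; keeping the width m independent of R makes it linear. *)
definition sym_poly_deg :: "nat \<Rightarrow> 'a::comm_ring_1 poly \<Rightarrow> 'a poly" where
  "sym_poly_deg m R = (\<Sum>i\<le>m. smult (coeff R i) ([:1, 0, 1:] ^ i * monom 1 (m - i)))"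

lemma sym_poly_conv_sym_poly_deg: "sym_poly q = sym_poly_deg (degree q) q"
  by (simp add: sym_poly_def sym_poly_deg_def)

lemma sym_poly_deg_add: "sym_poly_deg m (R + T) = sym_poly_deg m R + sym_poly_deg m T"
  by (simp add: sym_poly_deg_def sum.distrib smult_add_left)

lemma sym_poly_deg_diff: "sym_poly_deg m (R - T) = sym_poly_deg m R - sym_poly_deg m T"
  by (simp add: sym_poly_deg_def sum_subtractf smult_diff_left)

lemma sym_poly_deg_smult: "sym_poly_deg m (smult c R) = smult c (sym_poly_deg m R)"
  by (rule poly_eqI) (simp add: sym_poly_deg_def coeff_sum sum_distrib_left mult.assoc)

lemma sym_poly_deg_monom: "sym_poly_deg m (monom c m) = smult c ([:1, 0, 1:] ^ m)"
  by (simp add: sym_poly_deg_def coeff_monom if_distrib[of "\<lambda>c. smult c _"] cong: if_cong)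

lemma sym_poly_deg_0: "sym_poly_deg 0 R = [:coeff R 0:]"
  by (simp add: sym_poly_deg_def monom_0)

lemma sym_poly_deg_shift:
  assumes "degree R \<le> m"
  shows "monom 1 k * sym_poly_deg m R = sym_poly_deg (m + k) R"
proof -
  have "sym_poly_deg (m + k) R =
      (\<Sum>i\<le>m. smult (coeff R i) ([:1, 0, 1:] ^ i * monom 1 (m + k - i)))"
    unfolding sym_poly_deg_def
    by (rule sum.mono_neutral_right) (use assms in \<open>auto simp: coeff_eq_0\<close>)
  also have "\<dots> = monom 1 k * sym_poly_deg m R"
    unfolding sym_poly_deg_def sum_distrib_left
  proof (intro sum.cong refl)
    fix i assume "i \<in> {..m}"
    then have "monom 1 (m + k - i) = monom 1 k * monom (1::'a) (m - i)"
      by (simp add: mult_monom add.commute)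
    then show "smult (coeff R i) ([:1, 0, 1:] ^ i * monom 1 (m + k - i)) =
        monom 1 k * smult (coeff R i) ([:1, 0, 1:] ^ i * monom 1 (m - i))"
      by (simp add: algebra_simps)
  qed
  finally show ?thesis ..
qed

lemma sym_poly_deg_pCons:
  "sym_poly_deg (Suc n) (pCons a T) = smult a (monom 1 (Suc n)) + [:1, 0, 1:] * sym_poly_deg n T"
  unfolding sym_poly_deg_def sum.atMost_Suc_shift
  by (simp add: sum_distrib_left algebra_simps)

lemma sym_poly_deg_mult:
  assumes "degree R \<le> m" "degree T \<le> n"
  shows "sym_poly_deg m R * sym_poly_deg n T = sym_poly_deg (m + n) (R * T)"
  using assms(2)
proof (induction n arbitrary: T)
  case 0
  then obtain t where "T = [:t:]" by (metis degree_eq_zeroE le_zero_eq)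
  then show ?case by (simp add: sym_poly_deg_0 sym_poly_deg_smult)
next
  case (Suc n)
  obtain a T' where T: "T = pCons a T'" by (cases T)
  have "degree T' \<le> n" using Suc.prems T by (auto split: if_splits)
  then have "degree (R * T') \<le> m + n"
    using assms(1) degree_mult_le[of R T'] by linarith
  have "sym_poly_deg m R * sym_poly_deg (Suc n) T =
      smult a (monom 1 (Suc n) * sym_poly_deg m R) +
      [:1, 0, 1:] * (sym_poly_deg m R * sym_poly_deg n T')"
    by (simp add: T sym_poly_deg_pCons algebra_simps)
  also have "\<dots> =
      smult a (sym_poly_deg (Suc (m + n)) R) + [:1, 0, 1:] * sym_poly_deg (m + n) (R * T')"
    using sym_poly_deg_shift[OF assms(1)] Suc.IH[OF \<open>degree T' \<le> n\<close>] by simp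
  also have "\<dots> = sym_poly_deg (m + Suc n) (R * T)"
    using sym_poly_deg_pCons[of "m + n" 0 "R * T'"]
    by (simp add: T sym_poly_deg_add sym_poly_deg_smult)
  finally show ?case .
qed

lemma degree_sq_plus_1_power: "degree ([:1, 0, 1::'a::idom:] ^ n) = 2 * n"
  by (simp add: degree_power_eq)

lemma degree_lead_coeff_sq_plus_1_power_monom:
  assumes "i \<le> m"
  shows "degree ([:1, 0, 1::'a::idom:] ^ i * monom 1 (m - i)) = m + i"
    "lead_coeff ([:1, 0, 1::'a::idom:] ^ i * monom 1 (m - i)) = 1"
  using assms
  by (subst degree_mult_eq; simp add: degree_sq_plus_1_power degree_monom_eq)
    (simp add: lead_coeff_mult lead_coeff_power degree_monom_eq)

lemma degree_lead_coeff_sym_poly_deg: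
  fixes R :: "'a::idom poly"
  assumes "R \<noteq> 0" "degree R \<le> m"
  shows "degree (sym_poly_deg m R) = m + degree R" "lead_coeff (sym_poly_deg m R) = lead_coeff R"
proof -
  define d where "d = degree R"
  define A where "A = smult (lead_coeff R) ([:1, 0, 1:] ^ d * monom 1 (m - d))"
  define L where "L = (\<Sum>i<d. smult (coeff R i) ([:1, 0, 1:] ^ i * monom 1 (m - i)))"
  have "sym_poly_deg m R = (\<Sum>i\<le>d. smult (coeff R i) ([:1, 0, 1:] ^ i * monom 1 (m - i)))"
    unfolding sym_poly_deg_def
    by (rule sum.mono_neutral_right) (use assms in \<open>auto simp: d_def coeff_eq_0\<close>)
  also have "\<dots> = A + L"
    by (simp add: A_def L_def d_def lessThan_Suc_atMost[symmetric])
  finally have decomp: "sym_poly_deg m R = A + L" .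
  have A: "degree A = m + d" "coeff A (m + d) = lead_coeff R"
    using assms degree_lead_coeff_sq_plus_1_power_monom[of d m, where 'a = 'a]
    by (simp_all add: A_def d_def)
  have L: "coeff L j = 0" if "m + d \<le> j" for j
  proof (cases "d = 0")
    case False
    have "degree L < m + d"
      unfolding L_def
    proof (rule degree_sum_less)
      fix i assume "i \<in> {..<d}"
      then have "degree ([:1, 0, 1::'a:] ^ i * monom 1 (m - i)) < m + d"
        using assms(2) degree_lead_coeff_sq_plus_1_power_monom(1)[of i m, where 'a = 'a]
        by (simp add: d_def)
      then show "degree (smult (coeff R i) ([:1, 0, 1:] ^ i * monom 1 (m - i))) < m + d"
        using degree_smult_le le_less_trans by blast
    qed (use False in simp)
    then show ?thesis
      using that by (simp add: coeff_eq_0)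
  qed (simp add: L_def)
  have "degree (A + L) \<le> m + d"
    by (rule degree_le) (use A L in \<open>auto simp: coeff_eq_0\<close>)
  moreover have "coeff (A + L) (m + d) = lead_coeff R"
    using A L by simp
  ultimately show "degree (sym_poly_deg m R) = m + degree R"
    and "lead_coeff (sym_poly_deg m R) = lead_coeff R"
    using assms(1) le_degree[of "A + L" "m + d"] by (simp_all add: decomp d_def)
qed

lemma sym_poly_deg_inject:
  fixes R T :: "'a::idom poly"
  assumes "degree R \<le> m" "degree T \<le> m" "sym_poly_deg m R = sym_poly_deg m T"
  shows "R = T"
proof (rule ccontr)
  assume "R \<noteq> T"
  then have "R - T \<noteq> 0" "degree (R - T) \<le> m"
    using assms(1,2) degree_diff_le by auto
  then have "lead_coeff (sym_poly_deg m (R - T)) \<noteq> 0"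
    using degree_lead_coeff_sym_poly_deg(2) leading_coeff_neq_0 by metis
  moreover have "sym_poly_deg m (R - T) = 0"
    using assms(3) by (simp add: sym_poly_deg_diff)
  ultimately show False by simp
qed

lemma coeff_1_sq_plus_1_power: "coeff ([:1, 0, 1::'a::comm_semiring_1:] ^ n) 1 = 0"
  by (induction n) (simp_all add: coeff_pCons)

lemma coeff_sym_poly_deg_1:
  fixes R :: "'a::comm_ring_1 poly"
  assumes "1 \<le> m"
  shows "coeff (sym_poly_deg m R) 1 = coeff R (m - 1)"
proof -
  have coeff_term: "coeff ([:1, 0, 1::'a:] ^ i * monom 1 (m - i)) 1 = (if i = m - 1 then 1 else 0)"
    if "i \<le> m" for i
  proof -
    have "coeff ([:1, 0, 1::'a:] ^ i * monom 1 (m - i)) 1 =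
        (if 1 < m - i then 0 else coeff ([:1, 0, 1::'a:] ^ i) (1 - (m - i)))"
      by (simp add: mult.commute[of _ "monom 1 (m - i)"] coeff_monom_mult)
    also have "\<dots> = (if i = m - 1 then 1 else 0)"
      using that assms by (auto simp: coeff_0_power coeff_1_sq_plus_1_power[unfolded One_nat_def])
    finally show ?thesis .
  qed
  have "coeff (sym_poly_deg m R) 1 = (\<Sum>i\<le>m. if i = m - 1 then coeff R i else 0)"
    unfolding sym_poly_deg_def coeff_sum coeff_smult
    by (intro sum.cong refl) (simp only: coeff_term atMost_iff, simp)
  also have "\<dots> = coeff R (m - 1)"
    by (simp add: sum.delta)
  finally show ?thesis .
qed

section \<open>Palindromic polynomials\<close>

(* Symmetry about a fixed width n rather than about the degree, so that these form a linear space. *)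
definition palindromic :: "nat \<Rightarrow> 'a::zero poly \<Rightarrow> bool" where
  "palindromic n G \<longleftrightarrow> degree G \<le> n \<and> (\<forall>i j. i + j = n \<longrightarrow> coeff G i = coeff G j)"

lemma palindromic_0 [simp]: "palindromic n 0"
  by (simp add: palindromic_def)

lemma palindromic_add: "palindromic n F \<Longrightarrow> palindromic n G \<Longrightarrow> palindromic n (F + G)"
  by (simp add: palindromic_def degree_add_le)

lemma palindromic_diff:
  "palindromic n F \<Longrightarrow> palindromic n G \<Longrightarrow> palindromic n (F - G :: 'a::ab_group_add poly)"
  by (simp add: palindromic_def degree_diff_le)

lemma palindromic_smult: "palindromic n G \<Longrightarrow> palindromic n (smult c G)"
  by (auto simp: palindromic_def intro: le_trans[OF degree_smult_le])

lemma palindromic_sum: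
  "(\<And>i. i \<in> A \<Longrightarrow> palindromic n (f i)) \<Longrightarrow> palindromic n (\<Sum>i\<in>A. f i)"
  by (induction A rule: infinite_finite_induct) (simp_all add: palindromic_add)

lemma palindromic_monom_mult:
  fixes F :: "'a::comm_semiring_1 poly"
  assumes "palindromic n F"
  shows "palindromic (n + 2 * k) (monom 1 k * F)"
  unfolding palindromic_def
proof (intro conjI allI impI)
  have "degree F \<le> n" using assms by (simp add: palindromic_def)
  then show "degree (monom 1 k * F) \<le> n + 2 * k"
    using degree_mult_le[of "monom 1 k" F] degree_monom_le[of "1::'a" k] by linarith
  have vanish: "coeff F j = 0" if "n < j" for j
    using \<open>degree F \<le> n\<close> that by (simp add: coeff_eq_0)
  fix i j assume ij: "i + j = n + 2 * k"
  then consider "i < k" | "j < k" | "k \<le> i" "k \<le> j" by linarith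
  then show "coeff (monom 1 k * F) i = coeff (monom 1 k * F) j"
  proof cases
    case 3
    then have "coeff F (i - k) = coeff F (j - k)"
      using assms ij by (simp add: palindromic_def)
    with 3 show ?thesis by (simp add: coeff_monom_mult)
  qed (use ij in \<open>simp_all add: coeff_monom_mult vanish\<close>)
qed

lemma palindromic_pCons_0:
  assumes "palindromic (Suc (Suc n)) (pCons 0 G)"
  shows "palindromic n G"
  unfolding palindromic_def
proof (intro conjI allI impI)
  have sym: "coeff (pCons 0 G) i = coeff (pCons 0 G) j" if "i + j = Suc (Suc n)" for i j
    using assms that by (simp add: palindromic_def)
  have "coeff G (Suc n) = 0"
    using sym[of 0 "Suc (Suc n)"] by simp
  moreover have "degree G \<le> Suc n"
    using assms by (auto simp: palindromic_def split: if_splits)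
  ultimately show "degree G \<le> n"
    by (metis degree_0 le_SucE leading_coeff_0_iff nat.distinct(1))
  fix i j assume "i + j = n"
  then show "coeff G i = coeff G j"
    using sym[of "Suc i" "Suc j"] by simp
qed

lemma reflect_poly_eq_iff_palindromic: "reflect_poly G = G \<longleftrightarrow> palindromic (degree G) G"
proof
  assume "reflect_poly G = G"
  then have "coeff G i = coeff G j" if "i + j = degree G" for i j
  proof -
    have "j = degree G - i" using that by simp
    then show ?thesis
      using that coeff_reflect_poly[of G i] \<open>reflect_poly G = G\<close> by simp
  qed
  then show "palindromic (degree G) G"
    by (simp add: palindromic_def)
next
  assume pal: "palindromic (degree G) G"
  show "reflect_poly G = G"
  proof (rule poly_eqI)
    fix i
    show "coeff (reflect_poly G) i = coeff G i"
    proof (cases "i \<le> degree G")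
      case True
      then show ?thesis
        using pal by (simp add: palindromic_def coeff_reflect_poly)
    qed (simp add: coeff_reflect_poly coeff_eq_0)
  qed
qed

lemma palindromic_sq_plus_1_power: "palindromic (2 * n) ([:1, 0, 1::'a::idom:] ^ n)"
proof -
  have "reflect_poly [:1, 0, 1::'a:] = [:1, 0, 1:]"
    by (rule poly_eqI) (simp add: coeff_reflect_poly coeff_pCons split: nat.split)
  then have "reflect_poly ([:1, 0, 1::'a:] ^ n) = [:1, 0, 1:] ^ n"
    by (simp add: reflect_poly_power)
  then show ?thesis
    by (simp add: reflect_poly_eq_iff_palindromic degree_sq_plus_1_power)
qed

lemma palindromic_sym_poly_deg: "palindromic (2 * m) (sym_poly_deg m (R :: 'a::idom poly))"
  unfolding sym_poly_deg_def
proof (intro palindromic_sum palindromic_smult)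
  fix i assume "i \<in> {..m}"
  then have "2 * m = 2 * i + 2 * (m - i)" by simp
  then show "palindromic (2 * m) ([:1, 0, 1::'a:] ^ i * monom 1 (m - i))"
    using palindromic_monom_mult[OF palindromic_sq_plus_1_power, of i "m - i"]
    by (simp add: mult.commute)
qed

lemma palindromic_imp_sym_poly_deg:
  fixes G :: "'a::idom poly"
  assumes "palindromic (2 * m) G"
  shows "\<exists>R. degree R \<le> m \<and> G = sym_poly_deg m R"
  using assms
proof (induction m arbitrary: G)
  case 0
  then have "G = sym_poly_deg 0 G"
    by (simp add: palindromic_def sym_poly_deg_0 degree_0_id)
  then show ?case using 0 by (auto simp: palindromic_def)
next
  case (Suc m)
  define c where "c = coeff G 0"
  define P where "P = [:1, 0, 1::'a:] ^ Suc m"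
  have "palindromic (2 * Suc m) (G - smult c P)"
    unfolding P_def by (intro palindromic_diff palindromic_smult Suc.prems palindromic_sq_plus_1_power)
  moreover obtain a G' where G': "G - smult c P = pCons a G'"
    by (cases "G - smult c P")
  moreover have "a = 0"
    using arg_cong[OF G', of "\<lambda>F. coeff F 0"] by (simp add: c_def P_def coeff_0_power)
  ultimately have "palindromic (Suc (Suc (2 * m))) (pCons 0 G')"
    by simp
  then have "palindromic (2 * m) G'"
    by (rule palindromic_pCons_0)
  then obtain R' where R': "degree R' \<le> m" "G' = sym_poly_deg m R'"
    using Suc.IH by blast
  have "G = smult c P + monom 1 1 * G'"
    using G' \<open>a = 0\<close> by (simp add: algebra_simps monom_Suc monom_0)
  also have "\<dots> = sym_poly_deg (Suc m) (monom c (Suc m) + R')"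
    using sym_poly_deg_shift[OF R'(1), of 1]
    by (simp add: R'(2) P_def sym_poly_deg_add sym_poly_deg_monom)
  finally have "G = sym_poly_deg (Suc m) (monom c (Suc m) + R')" .
  moreover have "degree (monom c (Suc m) + R') \<le> Suc m"
    using R'(1) degree_monom_le[of c "Suc m"] by (intro degree_add_le) auto
  ultimately show ?case
    by blast
qed

section \<open>Eisenstein's criterion\<close>

lemma not_dvd_coeff_mult_first:
  fixes f g :: "'a::idom poly"
  assumes p: "prime_elem p"
    and f: "\<And>k. k < i \<Longrightarrow> p dvd coeff f k" "\<not> p dvd coeff f i"
    and g: "\<And>k. k < j \<Longrightarrow> p dvd coeff g k" "\<not> p dvd coeff g j"
  shows "\<not> p dvd coeff (f * g) (i + j)"
proof
  have split: "coeff (f * g) (i + j) =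
      coeff f i * coeff g j + (\<Sum>k\<in>{..i + j} - {i}. coeff f k * coeff g (i + j - k))"
    unfolding coeff_mult by (subst sum.remove[of _ i]) auto
  have "p dvd (\<Sum>k\<in>{..i + j} - {i}. coeff f k * coeff g (i + j - k))"
  proof (rule dvd_sum)
    fix k assume "k \<in> {..i + j} - {i}"
    then have "k < i \<or> i + j - k < j" by auto
    then show "p dvd coeff f k * coeff g (i + j - k)"
      using f(1) g(1) by auto
  qed
  moreover assume "p dvd coeff (f * g) (i + j)"
  ultimately have "p dvd coeff f i * coeff g j"
    unfolding split by (simp add: dvd_add_left_iff)
  then show False
    using p f(2) g(2) by (simp add: prime_elem_dvd_mult_iff)
qed

lemma first_coeff_not_dvdE:
  assumes "\<not> p dvd lead_coeff f"
  obtains i where "i \<le> degree f" "\<not> p dvd coeff f i" "\<And>k. k < i \<Longrightarrow> p dvd coeff f k"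
proof
  define i where "i = (LEAST k. \<not> p dvd coeff f k)"
  show "\<not> p dvd coeff f i"
    unfolding i_def by (rule LeastI) (fact assms)
  show "i \<le> degree f"
    unfolding i_def by (rule Least_le) (fact assms)
  show "p dvd coeff f k" if "k < i" for k
    using that not_less_Least unfolding i_def by blast
qed

lemma eisenstein_criterion:
  fixes f g :: "'a::idom poly"
  assumes p: "prime_elem p"
    and lead: "\<not> p dvd lead_coeff (f * g)"
    and lower: "\<And>k. k < degree (f * g) \<Longrightarrow> p dvd coeff (f * g) k"
    and const: "\<not> p ^ 2 dvd coeff (f * g) 0"
  shows "degree f = 0 \<or> degree g = 0"
proof (rule ccontr)
  assume "\<not> (degree f = 0 \<or> degree g = 0)"
  then have pos: "0 < degree f" "0 < degree g" by auto
  then have "f \<noteq> 0" "g \<noteq> 0" by auto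
  then have deg: "degree (f * g) = degree f + degree g"
    by (rule degree_mult_eq)
  have "\<not> p dvd lead_coeff f" "\<not> p dvd lead_coeff g"
    using lead by (auto simp: lead_coeff_mult)
  then obtain i j where
    i: "i \<le> degree f" "\<not> p dvd coeff f i" "\<And>k. k < i \<Longrightarrow> p dvd coeff f k" and
    j: "j \<le> degree g" "\<not> p dvd coeff g j" "\<And>k. k < j \<Longrightarrow> p dvd coeff g k"
    by (metis first_coeff_not_dvdE)
  have "\<not> p dvd coeff (f * g) (i + j)"
    using p i j by (intro not_dvd_coeff_mult_first)
  then have "\<not> i + j < degree (f * g)"
    using lower by blast
  then have "i = degree f" "j = degree g"
    using deg i(1) j(1) by linarith+
  then have "p dvd coeff f 0" "p dvd coeff g 0"
    using i(3) j(3) pos by auto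
  then have "p ^ 2 dvd coeff f 0 * coeff g 0"
    by (simp add: power2_eq_square mult_dvd_mono)
  then show False
    using const by (simp add: coeff_mult)
qed

section \<open>Roots of cyclotomic polynomials\<close>

lemma coeff_prod_linear_factors:
  fixes r :: "nat \<Rightarrow> 'a::idom"
  shows "coeff (\<Prod>i<Suc n. [:- r i, 1:]) n = - (\<Sum>i<Suc n. r i)"
proof (induction n)
  case (Suc n)
  define Q where "Q = (\<Prod>i<Suc n. [:- r i, 1:])"
  have "degree Q = Suc n"
    unfolding Q_def by (subst degree_prod_eq_sum_degree) auto
  moreover have "lead_coeff Q = 1"
    unfolding Q_def by (subst lead_coeff_prod) simp
  moreover have "coeff Q n = - (\<Sum>i<Suc n. r i)"
    using Suc.IH by (simp only: Q_def)
  ultimately have "coeff (Q * [:- r (Suc n), 1:]) (Suc n) = - (\<Sum>i<Suc (Suc n). r i)"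
    by simp
  then show ?case
    unfolding Q_def by (simp only: prod.lessThan_Suc)
qed simp

lemma norm_coeff_degree_pred_le:
  fixes p :: "complex poly"
  assumes "lead_coeff p = 1" "degree p = Suc n" "\<And>z. poly p z = 0 \<Longrightarrow> norm z \<le> 1"
  shows "norm (coeff p n) \<le> Suc n"
proof -
  obtain r where "smult (lead_coeff p) (\<Prod>i<degree p. [:- r i, 1:]) = p"
    by (rule complex_poly_decompose')
  then have p: "p = (\<Prod>i<Suc n. [:- r i, 1:])"
    using assms(1,2) by simp
  have "norm (r i) \<le> 1" if "i < Suc n" for i
  proof (rule assms(3))
    show "poly p (r i) = 0"
      unfolding p poly_prod by (rule prod_zero) (use that in \<open>auto intro!: bexI[of _ i]\<close>)
  qed
  then have "norm (\<Sum>i<Suc n. r i) \<le> (\<Sum>i<Suc n. 1)"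
    by (intro norm_sum[THEN order_trans] sum_mono) auto
  then show ?thesis
    unfolding p coeff_prod_linear_factors norm_minus_cancel by simp
qed

lemma map_poly_of_rat_add:
  "map_poly (of_rat :: rat \<Rightarrow> 'a::field_char_0) (p + q) = map_poly of_rat p + map_poly of_rat q"
  by (rule poly_eqI) (simp add: coeff_map_poly of_rat_add)

lemma map_poly_of_rat_mult:
  "map_poly (of_rat :: rat \<Rightarrow> 'a::field_char_0) (p * q) = map_poly of_rat p * map_poly of_rat q"
  by (rule poly_eqI) (simp add: coeff_map_poly coeff_mult of_rat_sum of_rat_mult)

lemma irreducible_dvd_of_common_root:
  fixes F U :: "rat poly" and z :: "'a::field_char_0"
  assumes "irreducible F" "poly (map_poly of_rat F) z = 0" "poly (map_poly of_rat U) z = 0"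
  shows "F dvd U"
proof (rule ccontr)
  assume "\<not> F dvd U"
  with assms(1) have "gcd F U = 1"
    by (simp add: prime_elem_imp_coprime prime_elem_iff_irreducible)
  then obtain A B where "A * F + B * U = 1"
    by (metis bezout_coefficients_fst_snd)
  then have "poly (map_poly of_rat (A * F + B * U)) z = (1 :: 'a)"
    by simp
  then show False
    using assms(2,3) by (simp add: map_poly_of_rat_add map_poly_of_rat_mult)
qed

lemma cyclotomic_poly_root_norm:
  fixes y :: complex
  assumes "cyclotomic_poly f" "poly (map_poly of_int f) y = 0"
  shows "norm y = 1"
proof -
  obtain n z where n: "0 < n" and z: "(z::complex) ^ n = 1" "poly (map_poly of_int f) z = 0"
    and irr: "irreducible (map_poly (of_int :: int \<Rightarrow> rat) f)"
    using assms(1) unfolding cyclotomic_poly_def by blast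
  define F where "F = map_poly (of_int :: int \<Rightarrow> rat) f"
  define U where "U = monom (1::rat) n - 1"
  have F: "map_poly (of_rat :: rat \<Rightarrow> 'a::field_char_0) F = map_poly of_int f"
    by (rule poly_eqI) (simp add: F_def coeff_map_poly)
  have U: "poly (map_poly (of_rat :: rat \<Rightarrow> 'a::field_char_0) U) w = w ^ n - 1" for w
  proof -
    have "map_poly (of_rat :: rat \<Rightarrow> 'a) U = monom 1 n - 1"
      by (rule poly_eqI) (simp add: U_def coeff_map_poly of_rat_diff coeff_monom)
    then show ?thesis by (simp add: poly_monom)
  qed
  have "F dvd U"
    using irr z by (intro irreducible_dvd_of_common_root[where z = z])
      (simp_all add: F_def[symmetric] F U)
  then obtain K where "U = F * K"
    by (elim dvdE)
  then have "y ^ n - 1 = poly (map_poly of_int f) y * poly (map_poly of_rat K) y"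
    using U[of y] by (simp add: map_poly_of_rat_mult F)
  then have "norm y ^ n = 1 ^ n"
    using assms(2) by (simp flip: norm_power)
  then show ?thesis
    using n by (simp add: power_eq_imp_eq_base)
qed

section \<open>Properties of \<open>sym(q)\<close>\<close>

lemma degree_sym_poly: "degree (sym_poly q) = 2 * degree q"
  by (cases "q = 0")
    (simp_all add: sym_poly_conv_sym_poly_deg sym_poly_deg_0 degree_lead_coeff_sym_poly_deg)

lemma lead_coeff_sym_poly: "lead_coeff (sym_poly q) = lead_coeff q"
proof (cases "q = 0")
  case False
  then show ?thesis
    unfolding sym_poly_conv_sym_poly_deg by (rule degree_lead_coeff_sym_poly_deg(2)) simp
qed (simp add: sym_poly_conv_sym_poly_deg sym_poly_deg_0)

lemma palindromic_sym_poly: "palindromic (2 * degree q) (sym_poly q)"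
  by (simp add: sym_poly_conv_sym_poly_deg palindromic_sym_poly_deg)

lemma symplectic_poly_sym_poly: "lead_coeff q = 1 \<Longrightarrow> symplectic_poly (sym_poly q)"
  using lead_coeff_sym_poly[of q] palindromic_sym_poly[of q]
  by (simp add: symplectic_poly_def reflect_poly_eq_iff_palindromic degree_sym_poly)

lemma symplectic_poly_sym_poly_degE:
  assumes "symplectic_poly G"
  obtains m R where "degree G = 2 * m" "degree R \<le> m" "G = sym_poly_deg m R"
proof -
  obtain m where m: "degree G = 2 * m"
    using assms by (auto simp: symplectic_poly_def elim: evenE)
  moreover have "palindromic (2 * m) G"
    using assms m by (simp add: symplectic_poly_def reflect_poly_eq_iff_palindromic)
  ultimately show ?thesis
    using palindromic_imp_sym_poly_deg that by blast
qed

lemma symp_irreducible_sym_poly: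
  fixes q :: "int poly"
  assumes monic: "lead_coeff q = 1"
    and irred: "\<And>R T. q = R * T \<Longrightarrow> degree R = 0 \<or> degree T = 0"
  shows "symp_irreducible (sym_poly q)"
  unfolding symp_irreducible_def
proof (intro conjI notI)
  show "symplectic_poly (sym_poly q)"
    using monic by (rule symplectic_poly_sym_poly)
  assume "\<exists>G H. symplectic_poly G \<and> symplectic_poly H \<and> 0 < degree G \<and> 0 < degree H \<and>
    sym_poly q = G * H"
  then obtain G H where G: "symplectic_poly G" "0 < degree G" and H: "symplectic_poly H" "0 < degree H"
    and GH: "sym_poly q = G * H"
    by blast
  obtain m R where m: "degree G = 2 * m" "degree R \<le> m" "G = sym_poly_deg m R"
    using G(1) by (rule symplectic_poly_sym_poly_degE)
  obtain n T where n: "degree H = 2 * n" "degree T \<le> n" "H = sym_poly_deg n T"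
    using H(1) by (rule symplectic_poly_sym_poly_degE)
  have "G \<noteq> 0" "H \<noteq> 0"
    using G(2) H(2) by auto
  then have "degree (sym_poly q) = degree G + degree H"
    by (simp add: GH degree_mult_eq)
  then have deg_q: "degree q = m + n"
    using m(1) n(1) by (simp add: degree_sym_poly)
  have "sym_poly_deg (m + n) q = sym_poly_deg (m + n) (R * T)"
    using GH m(2,3) n(2,3) deg_q by (simp add: sym_poly_conv_sym_poly_deg sym_poly_deg_mult)
  then have qRT: "q = R * T"
    by (rule sym_poly_deg_inject[rotated 2]) (use deg_q m(2) n(2) degree_mult_le[of R T] in auto)
  then have "R \<noteq> 0" "T \<noteq> 0"
    using monic by auto
  then have "degree R + degree T = m + n"
    using qRT deg_q by (simp add: degree_mult_eq)
  then have "degree R = m" "degree T = n"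
    using m(2) n(2) by auto
  then show False
    using irred[OF qRT] G(2) H(2) m(1) n(1) by simp
qed

lemma coeff_pcompose_monom_1:
  fixes h :: "'a::idom poly"
  assumes "1 < k"
  shows "coeff (pcompose h (monom 1 k)) 1 = 0"
proof -
  have "coeff (pcompose h (monom 1 k)) 1 = poly (pderiv (pcompose h (monom 1 k))) 0"
    by (simp add: poly_0_coeff_0 coeff_pderiv)
  also have "\<dots> = 0"
    using assms by (simp add: pderiv_pcompose pderiv_monom poly_monom)
  finally show ?thesis .
qed

lemma sym_poly_not_pcompose_monom:
  assumes "0 < degree q" "coeff q (degree q - 1) \<noteq> 0" "1 < k"
  shows "sym_poly q \<noteq> pcompose h (monom 1 k)"
proof
  assume "sym_poly q = pcompose h (monom 1 k)"
  then have "coeff (sym_poly q) 1 = 0"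
    using coeff_pcompose_monom_1[OF assms(3), of h] by simp
  moreover have "coeff (sym_poly q) 1 = coeff q (degree q - 1)"
    using assms(1) coeff_sym_poly_deg_1[of "degree q" q] by (simp add: sym_poly_conv_sym_poly_deg)
  ultimately show False
    using assms(2) by simp
qed

lemma not_cyclotomic_sym_poly:
  fixes q :: "int poly"
  assumes "lead_coeff q = 1" "0 < degree q" "2 * int (degree q) < \<bar>coeff q (degree q - 1)\<bar>"
  shows "\<not> cyclotomic_poly (sym_poly q)"
proof
  assume cyc: "cyclotomic_poly (sym_poly q)"
  define d where "d = degree q"
  define S where "S = map_poly (of_int :: int \<Rightarrow> complex) (sym_poly q)"
  have deg: "degree S = Suc (2 * d - 1)" and lead: "lead_coeff S = 1"
    using assms(1,2) lead_coeff_sym_poly[of q] degree_sym_poly[of q]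
    by (simp_all add: S_def d_def degree_map_poly coeff_map_poly)
  have "coeff (sym_poly q) (2 * d - 1) = coeff (sym_poly q) 1"
    using palindromic_sym_poly[of q] assms(2) by (simp add: palindromic_def d_def)
  also have "\<dots> = coeff q (d - 1)"
    using assms(2) coeff_sym_poly_deg_1[of d q] by (simp add: sym_poly_conv_sym_poly_deg d_def)
  finally have "coeff S (2 * d - 1) = of_int (coeff q (d - 1))"
    by (simp add: S_def coeff_map_poly)
  moreover have "norm (coeff S (2 * d - 1)) \<le> Suc (2 * d - 1)"
    using lead deg cyclotomic_poly_root_norm[OF cyc]
    by (intro norm_coeff_degree_pred_le) (auto simp: S_def)
  ultimately have "\<bar>coeff q (d - 1)\<bar> \<le> 2 * int d"
    using assms(2) unfolding d_def by (simp add: of_int_less_iff[symmetric])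
  then show False
    using assms(3) by (simp add: d_def)
qed

theorem proposition3p5:
  fixes p :: int and g :: nat and a :: "nat \<Rightarrow> int" and q :: "int poly"
  assumes "prime p" and "g \<ge> 1"
    and "\<bar>a (g - 1) * p\<bar> > 2 * int g"
    and "\<not> p dvd a 0"
    and "q = monom 1 g + (\<Sum>i<g. monom (a i * p) i)"
  shows "symp_irreducible (sym_poly q) \<and> \<not> cyclotomic_poly (sym_poly q) \<and>
         \<not> (\<exists>k::nat. k > 1 \<and> (\<exists>h. sym_poly q = pcompose h (monom 1 k)))"
proof -
  have coeff_q: "coeff q i = (if i = g then 1 else if i < g then a i * p else 0)" for i
    unfolding assms(5) coeff_add coeff_sum coeff_monom by (simp add: sum.delta)
  have deg_q: "degree q = g"
    by (intro antisym degree_le le_degree) (simp_all add: coeff_q)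
  then have monic: "lead_coeff q = 1" and big: "2 * int (degree q) < \<bar>coeff q (degree q - 1)\<bar>"
    using assms(2,3) by (simp_all add: coeff_q)
  have "degree R = 0 \<or> degree T = 0" if "q = R * T" for R T
  proof (rule eisenstein_criterion)
    show "prime_elem p"
      using assms(1) by (rule prime_imp_prime_elem)
    show "\<not> p dvd lead_coeff (R * T)"
      using assms(1) monic that not_prime_unit by metis
    show "p dvd coeff (R * T) k" if "k < degree (R * T)" for k
      using that deg_q by (simp add: coeff_q flip: \<open>q = R * T\<close>)
    show "\<not> p\<^sup>2 dvd coeff (R * T) 0"
      using assms(1,2,4) by (auto simp: coeff_q power2_eq_square simp flip: \<open>q = R * T\<close>)
  qed
  then show ?thesis
    using symp_irreducible_sym_poly[OF monic] not_cyclotomic_sym_poly[OF monic _ big]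
      sym_poly_not_pcompose_monom[of q] big assms(2) deg_q by auto
qed

end
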